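(* Let $\mathcal{X},\mathcal{Y}$ be families of metric spaces and $\alpha,\beta$ ordinals. (1) If $\mathcal{X}\in\mathfrak{C}_\beta$ and $\beta<\alpha$, then $\mathcal{X}\in\mathfrak{C}_\alpha$. (2) If $\mathcal{X},\mathcal{Y}\in\mathfrak{C}_\alpha$, then $\mathcal{X}\cup\mathcal{Y}\in\mathfrak{C}_\alpha$. (3) If $\mathcal{X}\prec\mathcal{Y}$ and $\mathcal{Y}\in\mathfrak{C}_\alpha$, then $\mathcal{X}\in\mathfrak{C}_\alpha$.
   Context: A family $\mathcal{U}$ of metric subspaces of a metric space $(X,d)$ is $r$-disjoint if $d(x,y)>r$ whenever $x\in U$, $y\in U'$, $U\neq U'$ in $\mathcal{U}$. For families $\mathcal{X},\mathcal{Y}$ and $R\in\mathbb{R}^{\mathbb{N}}$, $\mathcal{X}\xrightarrow{R}\mathcal{Y}$ means: there is an integer $k$ such that for each $X\in\mathcal{X}$ there are subcollections $\mathcal{U}_1,\dots,\mathcal{U}_k\subseteq\mathcal{Y}$ of subspaces of $X$, each $\mathcal{U}_i$ being $R_i$-disjoint, with $\bigcup_i\mathcal{U}_i$ covering $X$. A family is bounded if the diameters of its members are uniformly bounded. $\mathfrak{C}_0$ is the class of bounded families; for an ordinal $\alpha>0$, $\mathfrak{C}_\alpha$ is the class of families $\mathcal{X}$ such that for every $R\in\mathbb{R}^{\mathbb{N}}$ there exist $\beta<\alpha$ and $\mathcal{Y}\in\mathfrak{C}_\beta$ with $\mathcal{X}\xrightarrow{R}\mathcal{Y}$. $\mathcal{X}\prec\mathcal{Y}$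 means that every $X\in\mathcal{X}$ is a (metric) subspace of some $Y\in\mathcal{Y}$. *)

theory Defs
  imports "HOL-Analysis.Abstract_Metric_Spaces"
begin

definition msubspace :: "'a metric \<Rightarrow> 'a metric \<Rightarrow> bool" where
  "msubspace V X \<longleftrightarrow> mspace V \<subseteq> mspace X \<and> V = submetric X (mspace V)"

definition bounded_family :: "'a metric set \<Rightarrow> bool" where
  "bounded_family XX \<longleftrightarrow>
     (\<exists>D::real. \<forall>X\<in>XX. \<forall>x\<in>mspace X. \<forall>y\<in>mspace X. mdist X x y \<le> D)"

definition arrow :: "'a metric set \<Rightarrow> (nat \<Rightarrow> real) \<Rightarrow> 'a metric set \<Rightarrow> bool" where
  "arrow XX R YY \<longleftrightarrow>
     (\<exists>k::nat. \<forall>X\<in>XX. \<exists>U :: nat \<Rightarrow> 'a metric set.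
        (\<forall>i\<in>{1..k}. U i \<subseteq> YY \<and> (\<forall>V\<in>U i. msubspace V X) \<and>
            (\<forall>V\<in>U i. \<forall>V'\<in>U i. V \<noteq> V' \<longrightarrow>
               (\<forall>x\<in>mspace V. \<forall>y\<in>mspace V'. mdist X x y > R i))) \<and>
        mspace X \<subseteq> (\<Union>i\<in>{1..k}. \<Union>V\<in>U i. mspace V))"

definition Cls :: "'o::wellorder \<Rightarrow> 'a metric set set" where
  "Cls = wfrec {(b, a). b < a}
     (\<lambda>C a. if (\<forall>b. \<not> b < a) then {XX. bounded_family XX}
            else {XX. \<forall>R. \<exists>b. b < a \<and> (\<exists>YY\<in>C b. arrow XX R YY)})"

definition prec :: "'a metric set \<Rightarrow> 'a metric set \<Rightarrow> bool" where
  "prec XX YY \<longleftrightarrow> (\<forall>X\<in>XX. \<exists>Y\<in>YY. msubspace X Y)"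

lemma Cls_unfold:
  "Cls a = (if (\<forall>b. \<not> b < a) then {XX. bounded_family XX}
            else {XX. \<forall>R. \<exists>b. b < a \<and> (\<exists>YY\<in>Cls b. arrow XX R YY)})"
  unfolding Cls_def
  by (subst wfrec[OF wf]) (simp add: cut_def cong: conj_cong)

end

theory Submission
  imports Defs
begin

text \<open>All three claims go by well-founded induction on the index. At the bottom level they
  are facts about uniformly bounded families. Above it, decompositions are transported:
  R-decompositions of the members of XX and of YY together decompose XX \<union> YY, once the
  two target families are raised to a common lower level by (1); and an R-decomposition
  of Y restricts to one of any subspace X of Y, whose pieces are subspaces of the old
  pieces, a family that stays in the same class by the induction hypothesis for (3).\<close>

lemma msubspace_refl: "msubspace X X"
  by (simp add: msubspace_def)

lemma msubspace_mdist: "msubspace V X \<Longrightarrow> mdist V = mdist X"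
  unfolding msubspace_def by (metis mdist_submetric)

lemma msubspace_submetric: "msubspace (submetric V S) V"
  unfolding msubspace_def by simp (metis submetric_restrict Int_commute)

lemma msubspace_submetric_Int:
  assumes "msubspace V Y" "msubspace X Y"
  shows "msubspace (submetric V (mspace X)) X"
proof -
  have "submetric V (mspace X) = submetric Y (mspace V \<inter> mspace X)"
    using assms(1) unfolding msubspace_def by (metis submetric_submetric)
  also have "\<dots> = submetric X (mspace X \<inter> mspace V)"
    using assms(2) unfolding msubspace_def by (metis submetric_submetric Int_commute Int_absorb)
  finally show ?thesis
    unfolding msubspace_def by (metis Int_lower1 mspace_submetric)
qed

definition subspaces :: "'a metric set \<Rightarrow> 'a metric set" where
  "subspaces ZZ = {W. \<exists>Z\<in>ZZ. msubspace W Z}"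

definition disjoint_subspaces :: "real \<Rightarrow> 'a metric \<Rightarrow> 'a metric set \<Rightarrow> bool" where
  "disjoint_subspaces r X UU \<longleftrightarrow> (\<forall>V\<in>UU. msubspace V X) \<and>
     (\<forall>V\<in>UU. \<forall>V'\<in>UU. V \<noteq> V' \<longrightarrow> (\<forall>x\<in>mspace V. \<forall>y\<in>mspace V'. mdist X x y > r))"

definition separated_cover ::
    "nat \<Rightarrow> (nat \<Rightarrow> real) \<Rightarrow> 'a metric set \<Rightarrow> 'a metric \<Rightarrow> (nat \<Rightarrow> 'a metric set) \<Rightarrow> bool" where
  "separated_cover k R YY X U \<longleftrightarrow>
     (\<forall>i\<in>{1..k}. U i \<subseteq> YY \<and> disjoint_subspaces (R i) X (U i)) \<and>
     mspace X \<subseteq> (\<Union>i\<in>{1..k}. \<Union>V\<in>U i. mspace V)"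

lemma arrow_iff_separated_cover:
  "arrow XX R YY \<longleftrightarrow> (\<exists>k. \<forall>X\<in>XX. \<exists>U. separated_cover k R YY X U)"
  by (simp add: arrow_def separated_cover_def disjoint_subspaces_def)

lemma disjoint_subspaces_restrict:
  assumes "disjoint_subspaces r Y UU" "msubspace X Y"
  shows "disjoint_subspaces r X ((\<lambda>V. submetric V (mspace X)) ` UU)"
proof -
  have "mdist X = mdist Y" using assms(2) by (rule msubspace_mdist)
  then show ?thesis
    using assms msubspace_submetric_Int unfolding disjoint_subspaces_def by fastforce
qed

lemma separated_cover_mono:
  "separated_cover k R YY X U \<Longrightarrow> YY \<subseteq> ZZ \<Longrightarrow> separated_cover k R ZZ X U"
  unfolding separated_cover_def by (meson order_trans)

lemma separated_cover_pad:
  assumes cover: "separated_cover k R YY X U" and "k \<le> k'"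
  shows "separated_cover k' R YY X (\<lambda>i. if i \<le> k then U i else {})"
  unfolding separated_cover_def
proof (rule conjI, intro ballI)
  fix i assume "i \<in> {1..k'}"
  then show "(if i \<le> k then U i else {}) \<subseteq> YY \<and>
      disjoint_subspaces (R i) X (if i \<le> k then U i else {})"
    using cover by (auto simp: separated_cover_def disjoint_subspaces_def)
next
  have "{1..k} \<subseteq> {1..k'}"
    using \<open>k \<le> k'\<close> by auto
  then show "mspace X \<subseteq> (\<Union>i\<in>{1..k'}. \<Union>V\<in>(if i \<le> k then U i else {}). mspace V)"
    using cover unfolding separated_cover_def by fastforce
qed

lemma separated_cover_restrict:
  assumes cover: "separated_cover k R YY Y U" and XY: "msubspace X Y"
  shows "separated_cover k R (subspaces YY) X (\<lambda>i. (\<lambda>V. submetric V (mspace X)) ` U i)"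
proof -
  have "(\<lambda>V. submetric V (mspace X)) ` UU \<subseteq> subspaces YY" if "UU \<subseteq> YY" for UU
    using that msubspace_submetric by (auto simp: subspaces_def)
  moreover have "mspace X \<subseteq> mspace Y"
    using XY by (simp add: msubspace_def)
  ultimately show ?thesis
    using cover disjoint_subspaces_restrict[OF _ XY] unfolding separated_cover_def by fastforce
qed
lemma arrow_self: "arrow XX R XX"
  unfolding arrow_iff_separated_cover
proof (intro exI ballI)
  fix X assume "X \<in> XX"
  then show "separated_cover 1 R XX X (\<lambda>_. {X})"
    by (simp add: separated_cover_def disjoint_subspaces_def msubspace_refl)
qed

lemma arrow_Un:
  assumes "arrow XX R AA" "arrow YY R BB"
  shows "arrow (XX \<union> YY) R (AA \<union> BB)"
proof -
  obtain k1 k2 where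
    k1: "\<forall>X\<in>XX. \<exists>U. separated_cover k1 R AA X U" and
    k2: "\<forall>X\<in>YY. \<exists>U. separated_cover k2 R BB X U"
    using assms by (auto simp: arrow_iff_separated_cover)
  have "\<exists>U. separated_cover (max k1 k2) R (AA \<union> BB) X U" if "X \<in> XX \<union> YY" for X
  proof (cases "X \<in> XX")
    case True
    with k1 obtain U where "separated_cover k1 R AA X U" by blast
    then show ?thesis
      by (meson separated_cover_pad separated_cover_mono max.cobounded1 Un_upper1)
  next
    case False
    with that k2 obtain U where "separated_cover k2 R BB X U" by blast
    then show ?thesis
      by (meson separated_cover_pad separated_cover_mono max.cobounded2 Un_upper2)
  qed
  then show ?thesis
    unfolding arrow_iff_separated_cover by blast
qed

lemma arrow_prec:
  assumes "arrow YY R ZZ" "prec XX YY"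
  shows "arrow XX R (subspaces ZZ)"
proof -
  obtain k where k: "\<forall>Y\<in>YY. \<exists>U. separated_cover k R ZZ Y U"
    using assms(1) by (auto simp: arrow_iff_separated_cover)
  have "\<exists>U. separated_cover k R (subspaces ZZ) X U" if "X \<in> XX" for X
  proof -
    obtain Y U where "msubspace X Y" "separated_cover k R ZZ Y U"
      using \<open>X \<in> XX\<close> assms(2) k by (meson prec_def)
    then show ?thesis
      using separated_cover_restrict by blast
  qed
  then show ?thesis
    unfolding arrow_iff_separated_cover by blast
qed

lemma bounded_family_Un:
  "bounded_family XX \<Longrightarrow> bounded_family YY \<Longrightarrow> bounded_family (XX \<union> YY)"
  unfolding bounded_family_def by (metis Un_iff le_max_iff_disj)

lemma bounded_family_prec:
  assumes "bounded_family YY" "prec XX YY"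
  shows "bounded_family XX"
proof -
  obtain D where D: "\<forall>Y\<in>YY. \<forall>x\<in>mspace Y. \<forall>y\<in>mspace Y. mdist Y x y \<le> D"
    using assms(1) by (auto simp: bounded_family_def)
  have "mdist X x y \<le> D" if "X \<in> XX" "x \<in> mspace X" "y \<in> mspace X" for X x y
  proof -
    obtain Y where "Y \<in> YY" "msubspace X Y"
      using \<open>X \<in> XX\<close> assms(2) by (auto simp: prec_def)
    moreover from this have "mdist X = mdist Y" "mspace X \<subseteq> mspace Y"
      by (auto simp: msubspace_mdist msubspace_def)
    ultimately show ?thesis
      using D that by auto
  qed
  then show ?thesis
    unfolding bounded_family_def by blast
qed

lemma Cls_bottom: "\<forall>b. \<not> b < a \<Longrightarrow> XX \<in> Cls a \<longleftrightarrow> bounded_family XX"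
  by (subst Cls_unfold) simp

lemma Cls_nonbottom:
  "\<not> (\<forall>b. \<not> b < a) \<Longrightarrow> XX \<in> Cls a \<longleftrightarrow> (\<forall>R. \<exists>b<a. \<exists>YY\<in>Cls b. arrow XX R YY)"
  by (subst Cls_unfold) auto

lemma Cls_less_mono: "XX \<in> Cls \<beta> \<Longrightarrow> \<beta> < \<alpha> \<Longrightarrow> XX \<in> Cls \<alpha>"
  using Cls_nonbottom[of \<alpha>] arrow_self by blast

lemma Cls_mono: "XX \<in> Cls \<beta> \<Longrightarrow> \<beta> \<le> \<alpha> \<Longrightarrow> XX \<in> Cls \<alpha>"
  by (metis Cls_less_mono order_le_less)

lemma Cls_prec: "prec XX YY \<Longrightarrow> YY \<in> Cls \<alpha> \<Longrightarrow> XX \<in> Cls \<alpha>"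
proof (induction \<alpha> arbitrary: XX YY rule: less_induct)
  case (less a)
  show ?case
  proof (cases "\<forall>b. \<not> b < a")
    case True
    then show ?thesis
      using less.prems bounded_family_prec Cls_bottom by blast
  next
    case False
    have "\<exists>b<a. \<exists>ZZ\<in>Cls b. arrow XX R ZZ" for R
    proof -
      obtain b ZZ where "b < a" "ZZ \<in> Cls b" "arrow YY R ZZ"
        using less.prems(2) False Cls_nonbottom by blast
      moreover have "subspaces ZZ \<in> Cls b"
        using less.IH[OF \<open>b < a\<close> _ \<open>ZZ \<in> Cls b\<close>] by (auto simp: prec_def subspaces_def)
      ultimately show ?thesis
        using arrow_prec less.prems(1) by blast
    qed
    then show ?thesis
      using False Cls_nonbottom by blast
  qed
qed

lemma Cls_Un: "XX \<in> Cls \<alpha> \<Longrightarrow> YY \<in> Cls \<alpha> \<Longrightarrow> XX \<union> YY \<in> Cls \<alpha>"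
proof (induction \<alpha> arbitrary: XX YY rule: less_induct)
  case (less a)
  show ?case
  proof (cases "\<forall>b. \<not> b < a")
    case True
    then show ?thesis
      using less.prems bounded_family_Un Cls_bottom by blast
  next
    case False
    have "\<exists>b<a. \<exists>ZZ\<in>Cls b. arrow (XX \<union> YY) R ZZ" for R
    proof -
      obtain b1 AA where b1: "b1 < a" "AA \<in> Cls b1" "arrow XX R AA"
        using less.prems(1) False Cls_nonbottom by blast
      obtain b2 BB where b2: "b2 < a" "BB \<in> Cls b2" "arrow YY R BB"
        using less.prems(2) False Cls_nonbottom by blast
      have "AA \<in> Cls (max b1 b2)" "BB \<in> Cls (max b1 b2)"
        using Cls_mono[OF b1(2) max.cobounded1] Cls_mono[OF b2(2) max.cobounded2] .
      then have "AA \<union> BB \<in> Cls (max b1 b2)"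
        using less.IH b1 b2 by simp
      moreover have "max b1 b2 < a"
        using b1 b2 by simp
      ultimately show ?thesis
        using arrow_Un[OF b1(3) b2(3)] by blast
    qed
    then show ?thesis
      using False Cls_nonbottom by blast
  qed
qed

theorem lemma3p3:
  fixes XX YY :: "'a metric set" and \<alpha> \<beta> :: "'o::wellorder"
  shows "(XX \<in> Cls \<beta> \<and> \<beta> < \<alpha> \<longrightarrow> XX \<in> Cls \<alpha>)
       \<and> (XX \<in> Cls \<alpha> \<and> YY \<in> Cls \<alpha> \<longrightarrow> XX \<union> YY \<in> Cls \<alpha>)
       \<and> (prec XX YY \<and> YY \<in> Cls \<alpha> \<longrightarrow> XX \<in> Cls \<alpha>)"
  using Cls_less_mono Cls_Un Cls_prec by blast

end
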